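(* Every linear BCK-algebra $\mathcal A$ of order $n$ satisfies $\operatorname{id}(\mathcal A)\ge\frac{n^2+3n-2}{2n^2}$, and for every $n\ge3$ equality holds for $\mathcal C_n$: $\operatorname{id}(\mathcal C_n)=\frac{n^2+3n-2}{2n^2}$. In particular every finite linear BCK-algebra $\mathcal A$ satisfies $\frac12<\operatorname{id}(\mathcal A)\le1$.
   Context: A BCK-algebra is a set $A$ with a binary operation $\cdot$ and a constant $0$ such that for all $x,y,z\in A$: (BCK1) $((x\cdot y)\cdot(x\cdot z))\cdot(z\cdot y)=0$; (BCK2) $(x\cdot(x\cdot y))\cdot y=0$; (BCK3) $x\cdot x=0$; (BCK4) $0\cdot x=0$; (BCK5) $x\cdot y=0$ and $y\cdot x=0$ imply $x=y$. The order $x\le y$ iff $x\cdot y=0$; the algebra is linear if this order is a chain. For finite $\mathcal A$, $\operatorname{id}(\mathcal A)=|\{(x,y)\in A^2:x\cdot(y\cdot x)=x\}|/|A|^2$. For $n\ge2$, $\mathcal C_n$ is the BCK-algebra with carrier $\{0,1,\dots,n-1\}$ and $x\cdot y=\max\{x-y,0\}$. *)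

theory Defs
  imports Complex_Main
begin

definition bck_algebra :: "'a set \<Rightarrow> ('a \<Rightarrow> 'a \<Rightarrow> 'a) \<Rightarrow> 'a \<Rightarrow> bool" where
  "bck_algebra A mul z \<longleftrightarrow>
     z \<in> A \<and> (\<forall>x\<in>A. \<forall>y\<in>A. mul x y \<in> A) \<and>
     (\<forall>x\<in>A. \<forall>y\<in>A. \<forall>w\<in>A. mul (mul (mul x y) (mul x w)) (mul w y) = z) \<and>
     (\<forall>x\<in>A. \<forall>y\<in>A. mul (mul x (mul x y)) y = z) \<and>
     (\<forall>x\<in>A. mul x x = z) \<and>
     (\<forall>x\<in>A. mul z x = z) \<and>
     (\<forall>x\<in>A. \<forall>y\<in>A. mul x y = z \<and> mul y x = z \<longrightarrow> x = y)"

definition bck_le :: "('a \<Rightarrow> 'a \<Rightarrow> 'a) \<Rightarrow> 'a \<Rightarrow> 'a \<Rightarrow> 'a \<Rightarrow> bool" where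
  "bck_le mul z x y \<longleftrightarrow> mul x y = z"

definition linear_bck :: "'a set \<Rightarrow> ('a \<Rightarrow> 'a \<Rightarrow> 'a) \<Rightarrow> 'a \<Rightarrow> bool" where
  "linear_bck A mul z \<longleftrightarrow> (\<forall>x\<in>A. \<forall>y\<in>A. bck_le mul z x y \<or> bck_le mul z y x)"

definition id_deg :: "'a set \<Rightarrow> ('a \<Rightarrow> 'a \<Rightarrow> 'a) \<Rightarrow> real" where
  "id_deg A mul = real (card {(x, y). x \<in> A \<and> y \<in> A \<and> mul x (mul y x) = x}) / real (card A) ^ 2"

definition C_carrier :: "nat \<Rightarrow> int set" where
  "C_carrier n = {0..<int n}"

definition C_mul :: "int \<Rightarrow> int \<Rightarrow> int" where
  "C_mul x y = max (x - y) 0"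

end

theory Submission imports Defs begin

text \<open>In a BCK-algebra \<open>x \<cdot> 0 = x\<close>, so \<open>x \<cdot> (y \<cdot> x) = x\<close> holds whenever \<open>y \<le> x\<close> and whenever
  \<open>x = 0\<close>. In a linear algebra of order \<open>n\<close> the pairs with \<open>y \<le> x\<close> number \<open>n(n+1)/2\<close>, and
  the pairs \<open>(0, y)\<close> with \<open>y \<noteq> 0\<close> add \<open>n - 1\<close> more, giving \<open>(n\<^sup>2 + 3n - 2)/2\<close> solutions.
  In \<open>C\<^sub>n\<close> there are no others: for \<open>0 < x < y\<close> one has \<open>x \<cdot> (y \<cdot> x) = max (2x - y) 0 < x\<close>.\<close>

definition identity_pairs :: "'a set \<Rightarrow> ('a \<Rightarrow> 'a \<Rightarrow> 'a) \<Rightarrow> ('a \<times> 'a) set" where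
  "identity_pairs A mul = {(x, y). x \<in> A \<and> y \<in> A \<and> mul x (mul y x) = x}"

definition trivial_identity_pairs :: "'a set \<Rightarrow> ('a \<Rightarrow> 'a \<Rightarrow> 'a) \<Rightarrow> 'a \<Rightarrow> ('a \<times> 'a) set" where
  "trivial_identity_pairs A mul z =
     {(x, y). x \<in> A \<and> y \<in> A \<and> mul y x = z} \<union> {z} \<times> (A - {z})"

lemma id_deg_identity_pairs: "id_deg A mul = real (card (identity_pairs A mul)) / real (card A) ^ 2"
  by (simp add: id_deg_def identity_pairs_def)

lemma card_pairs_below_total_order:
  fixes R :: "'a \<Rightarrow> 'a \<Rightarrow> bool"
  assumes fin: "finite A"
    and refl: "\<forall>x\<in>A. R x x"
    and total: "\<forall>x\<in>A. \<forall>y\<in>A. R x y \<or> R y x"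
    and antisym: "\<forall>x\<in>A. \<forall>y\<in>A. R x y \<and> R y x \<longrightarrow> x = y"
  shows "2 * card {(x, y). x \<in> A \<and> y \<in> A \<and> R y x} = card A ^ 2 + card A"
proof -
  define D where "D = (\<lambda>x. (x, x)) ` A"
  define S where "S = {(x, y). x \<in> A \<and> y \<in> A \<and> x \<noteq> y \<and> R y x}"
  have fin_D: "finite D" and fin_S: "finite S"
    using fin by (auto simp: D_def S_def intro: finite_subset[of _ "A \<times> A"])
  have card_D: "card D = card A"
    unfolding D_def by (rule card_image) (simp add: inj_on_def)
  have swap_S: "prod.swap ` S = {(x, y). x \<in> A \<and> y \<in> A \<and> x \<noteq> y \<and> R x y}"
    by (auto simp: S_def image_iff)
  have "S \<union> prod.swap ` S = A \<times> A - D"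
    unfolding swap_S using total by (auto simp: S_def D_def)
  moreover have "S \<inter> prod.swap ` S = {}"
    unfolding swap_S using antisym by (auto simp: S_def)
  moreover have "card (prod.swap ` S) = card S"
    by (rule card_image) (auto simp: inj_on_def)
  moreover have "card (A \<times> A - D) = card A ^ 2 - card A"
    using card_Diff_subset[OF fin_D, of "A \<times> A"] card_D
    by (auto simp: D_def card_cartesian_product power2_eq_square)
  moreover have "finite (prod.swap ` S)"
    using fin_S by simp
  ultimately have "2 * card S = card A ^ 2 - card A"
    using card_Un_disjoint[OF fin_S] by (metis mult_2)
  moreover have "{(x, y). x \<in> A \<and> y \<in> A \<and> R y x} = D \<union> S"
    using refl by (auto simp: D_def S_def)
  moreover have "D \<inter> S = {}"
    by (auto simp: D_def S_def)
  moreover have "card A \<le> card A ^ 2"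
    by (simp add: power2_eq_square)
  ultimately show ?thesis
    using card_Un_disjoint[OF fin_D fin_S] card_D by simp
qed

lemma bck_mul_zero_right:
  assumes bck: "bck_algebra A mul z" and x: "x \<in> A"
  shows "mul x z = x"
proof -
  have z: "z \<in> A" and closed: "\<forall>x\<in>A. \<forall>y\<in>A. mul x y \<in> A"
    and bck2: "\<forall>x\<in>A. \<forall>y\<in>A. mul (mul x (mul x y)) y = z"
    and bck3: "\<forall>x\<in>A. mul x x = z" and bck4: "\<forall>x\<in>A. mul z x = z"
    and bck5: "\<forall>x\<in>A. \<forall>y\<in>A. mul x y = z \<and> mul y x = z \<longrightarrow> x = y"
    using bck unfolding bck_algebra_def by blast+
  have xz: "mul x z \<in> A" and xxz: "mul x (mul x z) \<in> A"
    using closed z x by blast+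
  have "mul x (mul x z) = z"
    using bck2 bck4 bck5 x z xxz by blast
  moreover have "mul (mul x z) x = z"
    using bck2 bck3 x by force
  ultimately show ?thesis
    using bck5 xz x by blast
qed

lemma bck_card_ge_one:
  assumes "finite A" and "bck_algebra A mul z"
  shows "card A \<ge> 1"
  using assms by (auto simp: bck_algebra_def Suc_le_eq card_gt_0_iff)

lemma trivial_identity_pairs_subset:
  assumes "bck_algebra A mul z"
  shows "trivial_identity_pairs A mul z \<subseteq> identity_pairs A mul"
proof -
  have z: "z \<in> A" and "\<forall>x\<in>A. \<forall>y\<in>A. mul x y \<in> A" and "\<forall>x\<in>A. mul z x = z"
    using assms unfolding bck_algebra_def by blast+
  then have "mul z (mul y z) = z" if "y \<in> A" for y
    using that by blast
  with z bck_mul_zero_right[OF assms] show ?thesis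
    by (auto simp: trivial_identity_pairs_def identity_pairs_def)
qed

lemma card_trivial_identity_pairs:
  assumes fin: "finite A" and bck: "bck_algebra A mul z" and lin: "linear_bck A mul z"
  shows "2 * card (trivial_identity_pairs A mul z) + 2 = card A ^ 2 + 3 * card A"
proof -
  define S where "S = {(x, y). x \<in> A \<and> y \<in> A \<and> mul y x = z}"
  define P where "P = {z} \<times> (A - {z})"
  have z: "z \<in> A"
    using bck by (simp add: bck_algebra_def)
  have "2 * card S = card A ^ 2 + card A"
    unfolding S_def
    by (rule card_pairs_below_total_order[OF fin, of "\<lambda>a b. mul a b = z"])
       (use bck lin in \<open>auto simp: linear_bck_def bck_le_def bck_algebra_def\<close>)
  moreover have "card P = card A - 1"
    using fin z by (simp add: P_def card_cartesian_product)
  moreover have "card A \<ge> 1"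
    using fin bck by (rule bck_card_ge_one)
  moreover have "S \<inter> P = {}"
    using bck_mul_zero_right[OF bck] z by (auto simp: S_def P_def)
  moreover have "finite S" "finite P"
    using fin by (auto simp: S_def P_def intro: finite_subset[of _ "A \<times> A"])
  ultimately show ?thesis
    unfolding trivial_identity_pairs_def S_def[symmetric] P_def[symmetric]
    by (simp add: card_Un_disjoint)
qed

lemma id_deg_lower_bound:
  assumes fin: "finite A" and bck: "bck_algebra A mul z" and lin: "linear_bck A mul z"
  shows "id_deg A mul \<ge> (real (card A) ^ 2 + 3 * real (card A) - 2) / (2 * real (card A) ^ 2)"
proof -
  have "finite (identity_pairs A mul)"
    using fin by (auto simp: identity_pairs_def intro: finite_subset[of _ "A \<times> A"])
  then have "card (trivial_identity_pairs A mul z) \<le> card (identity_pairs A mul)"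
    using card_mono trivial_identity_pairs_subset[OF bck] by blast
  then have "card A ^ 2 + 3 * card A \<le> 2 * card (identity_pairs A mul) + 2"
    using card_trivial_identity_pairs[OF fin bck lin] by linarith
  then have "real (card A ^ 2 + 3 * card A) \<le> real (2 * card (identity_pairs A mul) + 2)"
    by (simp only: of_nat_le_iff)
  then have "real (card A) ^ 2 + 3 * real (card A) - 2 \<le> 2 * real (card (identity_pairs A mul))"
    by simp
  then have "(real (card A) ^ 2 + 3 * real (card A) - 2) / (2 * real (card A) ^ 2)
      \<le> 2 * real (card (identity_pairs A mul)) / (2 * real (card A) ^ 2)"
    by (rule divide_right_mono) simp
  then show ?thesis
    unfolding id_deg_identity_pairs by simp
qed

lemma id_deg_le_one:
  assumes "finite A"
  shows "id_deg A mul \<le> 1"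
proof -
  have "card (identity_pairs A mul) \<le> card (A \<times> A)"
    using assms by (intro card_mono) (auto simp: identity_pairs_def)
  then have "real (card (identity_pairs A mul)) \<le> real (card A) ^ 2"
    by (metis card_cartesian_product of_nat_le_iff of_nat_power power2_eq_square)
  then show ?thesis
    unfolding id_deg_identity_pairs by (simp add: divide_le_eq)
qed

lemma half_less_lower_bound:
  fixes n :: real
  assumes "n \<ge> 1"
  shows "1/2 < (n ^ 2 + 3 * n - 2) / (2 * n ^ 2)"
  using assms by (simp add: field_simps)

lemma C_bck_algebra:
  assumes "n \<ge> 1"
  shows "bck_algebra (C_carrier n) C_mul 0"
  using assms by (simp add: bck_algebra_def C_carrier_def C_mul_def max_def)

lemma C_linear: "linear_bck (C_carrier n) C_mul 0"
  by (auto simp: linear_bck_def bck_le_def C_carrier_def C_mul_def)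

lemma C_identity_pairs:
  assumes "n \<ge> 1"
  shows "identity_pairs (C_carrier n) C_mul = trivial_identity_pairs (C_carrier n) C_mul 0"
proof
  show "identity_pairs (C_carrier n) C_mul \<subseteq> trivial_identity_pairs (C_carrier n) C_mul 0"
    by (auto simp: identity_pairs_def trivial_identity_pairs_def C_carrier_def C_mul_def max_def
        split: if_splits)
  show "trivial_identity_pairs (C_carrier n) C_mul 0 \<subseteq> identity_pairs (C_carrier n) C_mul"
    by (rule trivial_identity_pairs_subset[OF C_bck_algebra[OF assms]])
qed

lemma id_deg_C:
  assumes n: "n \<ge> 1"
  shows "id_deg (C_carrier n) C_mul = (real n ^ 2 + 3 * real n - 2) / (2 * real n ^ 2)"
proof -
  have "2 * card (identity_pairs (C_carrier n) C_mul) + 2 = n ^ 2 + 3 * n"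
    using card_trivial_identity_pairs[OF _ C_bck_algebra[OF n] C_linear] C_identity_pairs[OF n]
    by (simp add: C_carrier_def)
  then have "2 * real (card (identity_pairs (C_carrier n) C_mul)) + 2 = real n ^ 2 + 3 * real n"
    by (metis of_nat_add of_nat_mult of_nat_numeral of_nat_power)
  with n show ?thesis
    unfolding id_deg_identity_pairs by (simp add: C_carrier_def field_simps)
qed

theorem mainTheorem19:
  fixes A :: "'a set" and mul :: "'a \<Rightarrow> 'a \<Rightarrow> 'a" and z :: 'a
  shows "(finite A \<and> bck_algebra A mul z \<and> linear_bck A mul z \<longrightarrow>
            id_deg A mul \<ge> (real (card A) ^ 2 + 3 * real (card A) - 2) / (2 * real (card A) ^ 2))
       \<and> (\<forall>n::nat. n \<ge> 3 \<longrightarrow>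
            bck_algebra (C_carrier n) C_mul 0 \<and> linear_bck (C_carrier n) C_mul 0 \<and>
            id_deg (C_carrier n) C_mul = (real n ^ 2 + 3 * real n - 2) / (2 * real n ^ 2))
       \<and> (finite A \<and> bck_algebra A mul z \<and> linear_bck A mul z \<longrightarrow>
            1/2 < id_deg A mul \<and> id_deg A mul \<le> 1)"
proof (intro conjI impI allI)
  fix n :: nat
  assume "n \<ge> 3"
  then show "bck_algebra (C_carrier n) C_mul 0"
    and "id_deg (C_carrier n) C_mul = (real n ^ 2 + 3 * real n - 2) / (2 * real n ^ 2)"
    by (intro C_bck_algebra id_deg_C; simp)+
  show "linear_bck (C_carrier n) C_mul 0"
    by (rule C_linear)
next
  assume "finite A \<and> bck_algebra A mul z \<and> linear_bck A mul z"
  then have fin: "finite A" and bck: "bck_algebra A mul z" and lin: "linear_bck A mul z"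
    by auto
  show bound: "id_deg A mul \<ge> (real (card A) ^ 2 + 3 * real (card A) - 2) / (2 * real (card A) ^ 2)"
    by (rule id_deg_lower_bound[OF fin bck lin])
  have "card A \<ge> 1"
    using fin bck by (rule bck_card_ge_one)
  then have "1/2 < (real (card A) ^ 2 + 3 * real (card A) - 2) / (2 * real (card A) ^ 2)"
    by (intro half_less_lower_bound) simp
  with bound show "1/2 < id_deg A mul"
    by linarith
  show "id_deg A mul \<le> 1"
    by (rule id_deg_le_one[OF fin])
qed

end
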